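(* Let $r\geq 1$ be an integer. Then for any $s\in\mathbb{R}$ with $s>1$, $$ t_r(s)=\sum_{j=0}^{r}\frac{(-1)^{r-j}}{2^{(r-j)s}}\,\zeta_j(s)\,\zeta^{\star}_{r-j}(s) \quad\text{and}\quad t^{\star}_r(s)=\sum_{j=0}^{r}\frac{(-1)^{r-j}}{2^{(r-j)s}}\,\zeta_{r-j}(s)\,\zeta^{\star}_{j}(s). $$
   Context: For an integer $r\geq 1$ and real $s>1$ define, with integer summation indices, $\zeta_r(s):=\sum_{n_1>\cdots>n_r>0}\prod_{i=1}^r n_i^{-s}$, $\zeta^{\star}_r(s):=\sum_{n_1\geq\cdots\geq n_r\geq 1}\prod_{i=1}^r n_i^{-s}$, $t_r(s):=\sum_{n_1>\cdots>n_r>0}\prod_{i=1}^r (2n_i-1)^{-s}$, $t^{\star}_r(s):=\sum_{n_1\geq\cdots\geq n_r\geq 1}\prod_{i=1}^r (2n_i-1)^{-s}$. For $r=0$ all four functions are set equal to $1$: $\zeta_0(s)=\zeta^{\star}_0(s)=t_0(s)=t^{\star}_0(s)=1$. *)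

theory Defs
  imports "HOL-Analysis.Analysis"
begin

definition strict_idx :: "nat \<Rightarrow> nat list set" where
  "strict_idx r = {ns. length ns = r \<and> sorted_wrt (>) ns \<and> (\<forall>n\<in>set ns. 0 < n)}"

definition weak_idx :: "nat \<Rightarrow> nat list set" where
  "weak_idx r = {ns. length ns = r \<and> sorted_wrt (\<ge>) ns \<and> (\<forall>n\<in>set ns. 0 < n)}"

definition mzeta :: "nat \<Rightarrow> real \<Rightarrow> real" where
  "mzeta r s = (\<Sum>\<^sub>\<infinity> ns \<in> strict_idx r. (\<Prod>n\<leftarrow>ns. real n powr (-s)))"

definition mzeta_star :: "nat \<Rightarrow> real \<Rightarrow> real" where
  "mzeta_star r s = (\<Sum>\<^sub>\<infinity> ns \<in> weak_idx r. (\<Prod>n\<leftarrow>ns. real n powr (-s)))"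

definition mt :: "nat \<Rightarrow> real \<Rightarrow> real" where
  "mt r s = (\<Sum>\<^sub>\<infinity> ns \<in> strict_idx r. (\<Prod>n\<leftarrow>ns. (2 * real n - 1) powr (-s)))"

definition mt_star :: "nat \<Rightarrow> real \<Rightarrow> real" where
  "mt_star r s = (\<Sum>\<^sub>\<infinity> ns \<in> weak_idx r. (\<Prod>n\<leftarrow>ns. (2 * real n - 1) powr (-s)))"

end

theory Submission
  imports Defs "HOL-Computational_Algebra.Formal_Power_Series"
begin

(* Put w n = n^-s, u n = (2n-1)^-s and a = 2^-s, so that w (2n-1) = u n and w (2n) = a w n.
   Write E_v = prod_{n<=N} (1 + v n X) and H_v = prod_{n<=N} 1/(1 - v n X); their coefficients are
   the truncated strict and non-strict sums. Splitting the first 2N arguments of w into odd and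
   even ones gives E_w^(2N) = E_u E_aw, and E_aw H_(-aw) = 1, hence E_u = E_w^(2N) H_(-aw); dually
   H_u = H_w^(2N) E_(-aw). Comparing coefficients proves the theorem for truncated sums, and for
   nonnegative summable weights these converge to the infinite sums as N grows, also along 2N. *)

unbundle fps_syntax

lemma strict_idx_0 [simp]: "strict_idx 0 = {[]}"
  by (auto simp: strict_idx_def)

lemma weak_idx_0 [simp]: "weak_idx 0 = {[]}"
  by (auto simp: weak_idx_def)

lemma Cons_in_strict_idx_iff:
  "x # xs \<in> strict_idx (Suc k) \<longleftrightarrow> 0 < x \<and> (\<forall>y\<in>set xs. y < x) \<and> xs \<in> strict_idx k"
  by (auto simp: strict_idx_def)

lemma Cons_in_weak_idx_iff:
  "x # xs \<in> weak_idx (Suc k) \<longleftrightarrow> 0 < x \<and> (\<forall>y\<in>set xs. y \<le> x) \<and> xs \<in> weak_idx k"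
  by (auto simp: weak_idx_def)

lemma strict_idx_Suc_Int_lists:
  "strict_idx (Suc k) \<inter> lists {1..Suc N} =
     strict_idx (Suc k) \<inter> lists {1..N} \<union> Cons (Suc N) ` (strict_idx k \<inter> lists {1..N})"
  (is "?L = ?R")
proof (intro equalityI subsetI)
  fix ns assume ns: "ns \<in> ?L"
  then obtain x xs where ns_eq: "ns = x # xs" by (cases ns) (auto simp: strict_idx_def)
  show "ns \<in> ?R"
  proof (cases "x = Suc N")
    case True
    then show ?thesis using ns unfolding ns_eq by (auto simp: Cons_in_strict_idx_iff less_Suc_eq_le)
  next
    case False
    then have "x \<le> N" using ns unfolding ns_eq by simp
    then show ?thesis using ns unfolding ns_eq by (auto simp: Cons_in_strict_idx_iff)
  qed
qed (auto simp: Cons_in_strict_idx_iff less_Suc_eq_le le_Suc_eq)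

lemma weak_idx_Suc_Int_lists:
  "weak_idx (Suc k) \<inter> lists {1..Suc N} =
     weak_idx (Suc k) \<inter> lists {1..N} \<union> Cons (Suc N) ` (weak_idx k \<inter> lists {1..Suc N})"
  (is "?L = ?R")
proof (intro equalityI subsetI)
  fix ns assume ns: "ns \<in> ?L"
  then obtain x xs where ns_eq: "ns = x # xs" by (cases ns) (auto simp: weak_idx_def)
  show "ns \<in> ?R"
  proof (cases "x = Suc N")
    case True
    then show ?thesis using ns unfolding ns_eq by (auto simp: Cons_in_weak_idx_iff)
  next
    case False
    then have "x \<le> N" using ns unfolding ns_eq by simp
    then show ?thesis using ns unfolding ns_eq by (auto simp: Cons_in_weak_idx_iff)
  qed
qed (auto simp: Cons_in_weak_idx_iff intro: le_SucI)

lemma finite_strict_idx_Int_lists [simp]: "finite A \<Longrightarrow> finite (strict_idx k \<inter> lists A)"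
  by (rule finite_subset[OF _ finite_lists_length_eq[of A k]]) (auto simp: strict_idx_def)

lemma finite_weak_idx_Int_lists [simp]: "finite A \<Longrightarrow> finite (weak_idx k \<inter> lists A)"
  by (rule finite_subset[OF _ finite_lists_length_eq[of A k]]) (auto simp: weak_idx_def)

definition esym_upto :: "(nat \<Rightarrow> 'a::comm_semiring_1) \<Rightarrow> nat \<Rightarrow> nat \<Rightarrow> 'a" where
  "esym_upto v N k = (\<Sum>ns\<in>strict_idx k \<inter> lists {1..N}. \<Prod>n\<leftarrow>ns. v n)"

definition hsym_upto :: "(nat \<Rightarrow> 'a::comm_semiring_1) \<Rightarrow> nat \<Rightarrow> nat \<Rightarrow> 'a" where
  "hsym_upto v N k = (\<Sum>ns\<in>weak_idx k \<inter> lists {1..N}. \<Prod>n\<leftarrow>ns. v n)"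

lemma esym_upto_0 [simp]: "esym_upto v N 0 = 1"
  by (simp add: esym_upto_def)

lemma hsym_upto_0 [simp]: "hsym_upto v N 0 = 1"
  by (simp add: hsym_upto_def)

lemma esym_upto_0_Suc [simp]: "esym_upto v 0 (Suc k) = 0"
  by (simp add: esym_upto_def strict_idx_def)

lemma hsym_upto_0_Suc [simp]: "hsym_upto v 0 (Suc k) = 0"
  by (simp add: hsym_upto_def weak_idx_def)

lemma esym_upto_Suc_Suc:
  "esym_upto v (Suc N) (Suc k) = esym_upto v N (Suc k) + v (Suc N) * esym_upto v N k"
  unfolding esym_upto_def strict_idx_Suc_Int_lists
  by (subst sum.union_disjoint) (auto simp: sum.reindex sum_distrib_left)

lemma hsym_upto_Suc_Suc:
  "hsym_upto v (Suc N) (Suc k) = hsym_upto v N (Suc k) + v (Suc N) * hsym_upto v (Suc N) k"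
  unfolding hsym_upto_def weak_idx_Suc_Int_lists
  by (subst sum.union_disjoint) (auto simp: sum.reindex sum_distrib_left)

lemma prod_list_map_scale: "(\<Prod>n\<leftarrow>ns. c * v n) = c ^ length ns * (\<Prod>n\<leftarrow>ns. v n)"
  for c :: "'a::comm_monoid_mult"
  by (induction ns) (simp_all add: mult_ac)

lemma esym_upto_scale: "esym_upto (\<lambda>n. c * v n) N k = c ^ k * esym_upto v N k"
  unfolding esym_upto_def sum_distrib_left
  by (rule sum.cong) (auto simp: strict_idx_def prod_list_map_scale)

lemma hsym_upto_scale: "hsym_upto (\<lambda>n. c * v n) N k = c ^ k * hsym_upto v N k"
  unfolding hsym_upto_def sum_distrib_left
  by (rule sum.cong) (auto simp: weak_idx_def prod_list_map_scale)

definition esym_fps :: "(nat \<Rightarrow> 'a::comm_ring_1) \<Rightarrow> nat \<Rightarrow> 'a fps" where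
  "esym_fps v N = (\<Prod>n=1..N. 1 + fps_const (v n) * fps_X)"

definition hsym_fps :: "(nat \<Rightarrow> 'a::field) \<Rightarrow> nat \<Rightarrow> 'a fps" where
  "hsym_fps v N = (\<Prod>n=1..N. inverse (1 - fps_const (v n) * fps_X))"

lemma fps_nth_esym_fps: "esym_fps v N $ k = esym_upto v N k"
proof (induction N arbitrary: k)
  case 0
  then show ?case by (cases k) (simp_all add: esym_fps_def)
next
  case (Suc N)
  have "esym_fps v (Suc N) = esym_fps v N + fps_const (v (Suc N)) * (fps_X * esym_fps v N)"
    by (simp add: esym_fps_def algebra_simps)
  then show ?case using Suc.IH by (cases k) (simp_all add: esym_upto_Suc_Suc)
qed

lemma hsym_fps_Suc_mult: "hsym_fps v (Suc N) * (1 - fps_const (v (Suc N)) * fps_X) = hsym_fps v N"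
  by (simp add: hsym_fps_def mult.assoc inverse_mult_eq_1)

lemma fps_nth_hsym_fps: "hsym_fps v N $ k = hsym_upto v N k"
proof (induction N arbitrary: k)
  case 0
  then show ?case by (cases k) (simp_all add: hsym_fps_def)
next
  case (Suc N)
  define g where "g = hsym_fps v (Suc N)"
  have "g * (1 - fps_const (v (Suc N)) * fps_X) = hsym_fps v N"
    unfolding g_def by (rule hsym_fps_Suc_mult)
  then have g_eq: "g - fps_const (v (Suc N)) * (fps_X * g) = hsym_fps v N"
    by (simp only: right_diff_distrib mult_1_right mult.commute[of g] mult.assoc)
  have nth_eq: "g $ k - v (Suc N) * (if k = 0 then 0 else g $ (k - 1)) = hsym_upto v N k" for k
    unfolding Suc.IH[symmetric] g_eq[symmetric]
    by (simp only: fps_sub_nth fps_mult_left_const_nth fps_X_mult_nth)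
  show ?case
    unfolding g_def[symmetric]
  proof (induction k)
    case 0
    then show ?case using nth_eq[of 0] by simp
  next
    case (Suc k)
    then show ?case using nth_eq[of "Suc k"] by (simp add: hsym_upto_Suc_Suc diff_eq_eq)
  qed
qed

lemma esym_fps_mult_hsym_fps_uminus: "esym_fps v N * hsym_fps (\<lambda>n. - v n) N = 1"
  unfolding esym_fps_def hsym_fps_def prod.distrib[symmetric]
proof (rule prod.neutral, rule ballI)
  fix n
  have factor_eq: "1 - fps_const (- v n) * fps_X = 1 + fps_const (v n) * fps_X"
    by (simp flip: fps_const_neg)
  show "(1 + fps_const (v n) * fps_X) * inverse (1 - fps_const (- v n) * fps_X) = 1"
    unfolding factor_eq by (rule inverse_mult_eq_1') simp
qed

lemma hsym_fps_mult_esym_fps_uminus: "hsym_fps v N * esym_fps (\<lambda>n. - v n) N = 1"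
  using esym_fps_mult_hsym_fps_uminus[of "\<lambda>n. - v n" N] by (simp add: mult.commute)

lemma prod_atLeastAtMost_double:
  "(\<Prod>n=1..2*N. f n) = (\<Prod>m=1..N. f (2*m - 1) * f (2*m))" for N :: nat
  by (induction N) (simp_all add: prod.nat_ivl_Suc' mult_ac)

lemma esym_fps_bisect:
  assumes "\<And>m. m \<ge> 1 \<Longrightarrow> w (2*m - 1) = u m" and "\<And>m. m \<ge> 1 \<Longrightarrow> w (2*m) = v m"
  shows "esym_fps w (2*N) = esym_fps u N * esym_fps v N"
  unfolding esym_fps_def prod_atLeastAtMost_double prod.distrib[symmetric]
  using assms by (intro prod.cong) simp_all

lemma hsym_fps_bisect:
  assumes "\<And>m. m \<ge> 1 \<Longrightarrow> w (2*m - 1) = u m" and "\<And>m. m \<ge> 1 \<Longrightarrow> w (2*m) = v m"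
  shows "hsym_fps w (2*N) = hsym_fps u N * hsym_fps v N"
  unfolding hsym_fps_def prod_atLeastAtMost_double prod.distrib[symmetric]
  using assms by (intro prod.cong) simp_all

lemma esym_upto_bisect:
  fixes w u :: "nat \<Rightarrow> 'a::field"
  assumes "\<And>m. m \<ge> 1 \<Longrightarrow> w (2*m - 1) = u m" and "\<And>m. w (2*m) = a * w m"
  shows "esym_upto u N r = (\<Sum>i=0..r. (-a)^(r-i) * esym_upto w (2*N) i * hsym_upto w N (r-i))"
proof -
  have "esym_fps w (2*N) = esym_fps u N * esym_fps (\<lambda>n. a * w n) N"
    using assms by (intro esym_fps_bisect)
  then have "esym_fps u N = esym_fps w (2*N) * hsym_fps (\<lambda>n. - a * w n) N"
    using esym_fps_mult_hsym_fps_uminus[of "\<lambda>n. a * w n" N] by (simp add: mult.assoc)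
  then have "esym_upto u N r = (esym_fps w (2*N) * hsym_fps (\<lambda>n. - a * w n) N) $ r"
    by (simp only: fps_nth_esym_fps[symmetric])
  moreover have "hsym_upto (\<lambda>n. - (a * w n)) N k = (-a)^k * hsym_upto w N k" for k
    using hsym_upto_scale[of "-a" w N k] by simp
  ultimately show ?thesis
    by (simp add: fps_mult_nth fps_nth_esym_fps fps_nth_hsym_fps mult_ac)
qed

lemma hsym_upto_bisect:
  fixes w u :: "nat \<Rightarrow> 'a::field"
  assumes "\<And>m. m \<ge> 1 \<Longrightarrow> w (2*m - 1) = u m" and "\<And>m. w (2*m) = a * w m"
  shows "hsym_upto u N r = (\<Sum>i=0..r. (-a)^(r-i) * esym_upto w N (r-i) * hsym_upto w (2*N) i)"
proof -
  have "hsym_fps w (2*N) = hsym_fps u N * hsym_fps (\<lambda>n. a * w n) N"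
    using assms by (intro hsym_fps_bisect)
  then have "hsym_fps u N = hsym_fps w (2*N) * esym_fps (\<lambda>n. - a * w n) N"
    using hsym_fps_mult_esym_fps_uminus[of "\<lambda>n. a * w n" N] by (simp add: mult.assoc)
  then have "hsym_upto u N r = (hsym_fps w (2*N) * esym_fps (\<lambda>n. - a * w n) N) $ r"
    by (simp only: fps_nth_hsym_fps[symmetric])
  moreover have "esym_upto (\<lambda>n. - (a * w n)) N k = (-a)^k * esym_upto w N k" for k
    using esym_upto_scale[of "-a" w N k] by simp
  ultimately show ?thesis
    by (simp add: fps_mult_nth fps_nth_esym_fps fps_nth_hsym_fps mult_ac)
qed

lemma sum_prod_list_lists_length:
  fixes v :: "nat \<Rightarrow> 'a::comm_semiring_1"
  shows "(\<Sum>ns | set ns \<subseteq> B \<and> length ns = k. \<Prod>n\<leftarrow>ns. v n) = (\<Sum>n\<in>B. v n) ^ k"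
proof (induction k)
  case 0
  have "{ns. set ns \<subseteq> B \<and> length ns = 0} = {[]}" by auto
  then show ?case by simp
next
  case (Suc k)
  have "(\<Sum>ns | set ns \<subseteq> B \<and> length ns = Suc k. \<Prod>n\<leftarrow>ns. v n)
      = (\<Sum>(ns, n) \<in> {ns. set ns \<subseteq> B \<and> length ns = k} \<times> B. v n * (\<Prod>m\<leftarrow>ns. v m))"
    unfolding lists_length_Suc_eq by (subst sum.reindex[OF inj_split_Cons]) (simp add: case_prod_unfold)
  also have "\<dots> = (\<Sum>ns | set ns \<subseteq> B \<and> length ns = k. \<Prod>n\<leftarrow>ns. v n) * (\<Sum>n\<in>B. v n)"
    unfolding sum.cartesian_product[symmetric] sum_product by (simp add: mult.commute)
  finally show ?case using Suc.IH by (simp add: mult.commute)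
qed

lemma eventually_subset_lists_atLeastAtMost:
  assumes "finite F" and "F \<subseteq> lists {1..}"
  shows "eventually (\<lambda>N. F \<subseteq> lists {1..N}) sequentially"
proof -
  obtain M where M: "\<forall>n \<in> (\<Union>ns\<in>F. set ns). n \<le> M"
    using assms(1) finite_nat_set_iff_bounded_le by (metis finite_UN_I finite_set)
  have "F \<subseteq> lists {1..N}" if "N \<ge> M" for N
    using M assms(2) that by fastforce
  then show ?thesis
    unfolding eventually_sequentially by blast
qed

lemma filterlim_Int_lists_finite_subsets_at_top:
  assumes "A \<subseteq> {ns. length ns = k} \<inter> lists {1..}"
  shows "filterlim (\<lambda>N. A \<inter> lists {1..N}) (finite_subsets_at_top A) sequentially"
  unfolding filterlim_finite_subsets_at_top
proof (intro allI impI)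
  fix X assume X: "finite X \<and> X \<subseteq> A"
  have "finite (A \<inter> lists {1..N})" for N
    by (rule finite_subset[OF _ finite_lists_length_eq[of "{1..N}" k]]) (use assms in auto)
  moreover have "\<forall>\<^sub>F N in sequentially. X \<subseteq> lists {1..N}"
    using X assms by (intro eventually_subset_lists_atLeastAtMost) auto
  ultimately show "\<forall>\<^sub>F N in sequentially.
      finite (A \<inter> lists {1..N}) \<and> X \<subseteq> A \<inter> lists {1..N} \<and> A \<inter> lists {1..N} \<subseteq> A"
    using X by (auto elim: eventually_mono)
qed

lemma summable_on_prod_list:
  fixes v :: "nat \<Rightarrow> real"
  assumes nonneg: "\<And>n. 0 \<le> v n" and "summable v" and A: "A \<subseteq> {ns. length ns = k} \<inter> lists {1..}"
  shows "(\<lambda>ns. \<Prod>n\<leftarrow>ns. v n) summable_on A"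
proof (rule nonneg_bdd_above_summable_on)
  show prod_nonneg: "0 \<le> (\<Prod>n\<leftarrow>ns. v n)" for ns
    by (rule prod_list_nonneg) (auto simp: nonneg)
  show "bdd_above (sum (\<lambda>ns. \<Prod>n\<leftarrow>ns. v n) ` {F. F \<subseteq> A \<and> finite F})"
  proof (rule bdd_aboveI2)
    fix F assume F: "F \<in> {F. F \<subseteq> A \<and> finite F}"
    then have "finite F" and "F \<subseteq> lists {1..}"
      using A by auto
    then obtain M where M: "F \<subseteq> lists {1..M}"
      using eventually_subset_lists_atLeastAtMost[of F] unfolding eventually_sequentially by blast
    have "(\<Sum>ns\<in>F. \<Prod>n\<leftarrow>ns. v n) \<le> (\<Sum>ns | set ns \<subseteq> {1..M} \<and> length ns = k. \<Prod>n\<leftarrow>ns. v n)"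
      using F M A by (intro sum_mono2 finite_lists_length_eq) (auto simp: prod_nonneg)
    also have "\<dots> = (\<Sum>n=1..M. v n) ^ k"
      by (rule sum_prod_list_lists_length)
    also have "\<dots> \<le> suminf v ^ k"
      by (intro power_mono sum_le_suminf sum_nonneg) (simp_all add: nonneg assms(2))
    finally show "(\<Sum>ns\<in>F. \<Prod>n\<leftarrow>ns. v n) \<le> suminf v ^ k" .
  qed
qed

lemma tendsto_sum_Int_lists:
  fixes v :: "nat \<Rightarrow> real"
  assumes "\<And>n. 0 \<le> v n" and "summable v" and "A \<subseteq> {ns. length ns = k} \<inter> lists {1..}"
  shows "(\<lambda>N. \<Sum>ns\<in>A \<inter> lists {1..N}. \<Prod>n\<leftarrow>ns. v n) \<longlonglongrightarrow> (\<Sum>\<^sub>\<infinity>ns\<in>A. \<Prod>n\<leftarrow>ns. v n)"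
  using filterlim_compose[OF infsum_tendsto[OF summable_on_prod_list[OF assms]]
      filterlim_Int_lists_finite_subsets_at_top[OF assms(3)]] .

definition esym :: "(nat \<Rightarrow> real) \<Rightarrow> nat \<Rightarrow> real" where
  "esym v k = (\<Sum>\<^sub>\<infinity>ns\<in>strict_idx k. \<Prod>n\<leftarrow>ns. v n)"

definition hsym :: "(nat \<Rightarrow> real) \<Rightarrow> nat \<Rightarrow> real" where
  "hsym v k = (\<Sum>\<^sub>\<infinity>ns\<in>weak_idx k. \<Prod>n\<leftarrow>ns. v n)"

lemma esym_upto_tendsto:
  assumes "\<And>n. 0 \<le> v n" and "summable v"
  shows "(\<lambda>N. esym_upto v N k) \<longlonglongrightarrow> esym v k"
  unfolding esym_upto_def esym_def
  by (rule tendsto_sum_Int_lists[OF assms, where k = k]) (auto simp: strict_idx_def Suc_le_eq)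

lemma hsym_upto_tendsto:
  assumes "\<And>n. 0 \<le> v n" and "summable v"
  shows "(\<lambda>N. hsym_upto v N k) \<longlonglongrightarrow> hsym v k"
  unfolding hsym_upto_def hsym_def
  by (rule tendsto_sum_Int_lists[OF assms, where k = k]) (auto simp: weak_idx_def Suc_le_eq)

lemma esym_bisect:
  fixes w u :: "nat \<Rightarrow> real"
  assumes "\<And>m. m \<ge> 1 \<Longrightarrow> w (2*m - 1) = u m" and "\<And>m. w (2*m) = a * w m"
    and w: "\<And>n. 0 \<le> w n" "summable w" and u: "\<And>n. 0 \<le> u n" "summable u"
  shows "esym u r = (\<Sum>i=0..r. (-a)^(r-i) * esym w i * hsym w (r-i))"
proof (rule LIMSEQ_unique)
  show "(\<lambda>N. esym_upto u N r) \<longlonglongrightarrow> esym u r"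
    using u by (rule esym_upto_tendsto)
  have "strict_mono (\<lambda>N::nat. 2 * N)"
    by (rule strict_monoI) simp
  then have "(\<lambda>N. esym_upto w (2*N) i) \<longlonglongrightarrow> esym w i" for i
    using LIMSEQ_subseq_LIMSEQ[OF esym_upto_tendsto[OF w]] by (simp add: o_def)
  then have "(\<lambda>N. \<Sum>i=0..r. (-a)^(r-i) * esym_upto w (2*N) i * hsym_upto w N (r-i))
      \<longlonglongrightarrow> (\<Sum>i=0..r. (-a)^(r-i) * esym w i * hsym w (r-i))"
    by (intro tendsto_sum tendsto_mult tendsto_const hsym_upto_tendsto w)
  then show "(\<lambda>N. esym_upto u N r) \<longlonglongrightarrow> (\<Sum>i=0..r. (-a)^(r-i) * esym w i * hsym w (r-i))"
    using esym_upto_bisect[OF assms(1,2)] by simp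
qed

lemma hsym_bisect:
  fixes w u :: "nat \<Rightarrow> real"
  assumes "\<And>m. m \<ge> 1 \<Longrightarrow> w (2*m - 1) = u m" and "\<And>m. w (2*m) = a * w m"
    and w: "\<And>n. 0 \<le> w n" "summable w" and u: "\<And>n. 0 \<le> u n" "summable u"
  shows "hsym u r = (\<Sum>i=0..r. (-a)^(r-i) * esym w (r-i) * hsym w i)"
proof (rule LIMSEQ_unique)
  show "(\<lambda>N. hsym_upto u N r) \<longlonglongrightarrow> hsym u r"
    using u by (rule hsym_upto_tendsto)
  have "strict_mono (\<lambda>N::nat. 2 * N)"
    by (rule strict_monoI) simp
  then have "(\<lambda>N. hsym_upto w (2*N) i) \<longlonglongrightarrow> hsym w i" for i
    using LIMSEQ_subseq_LIMSEQ[OF hsym_upto_tendsto[OF w]] by (simp add: o_def)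
  then have "(\<lambda>N. \<Sum>i=0..r. (-a)^(r-i) * esym_upto w N (r-i) * hsym_upto w (2*N) i)
      \<longlonglongrightarrow> (\<Sum>i=0..r. (-a)^(r-i) * esym w (r-i) * hsym w i)"
    by (intro tendsto_sum tendsto_mult tendsto_const esym_upto_tendsto w)
  then show "(\<lambda>N. hsym_upto u N r) \<longlonglongrightarrow> (\<Sum>i=0..r. (-a)^(r-i) * esym w (r-i) * hsym w i)"
    using hsym_upto_bisect[OF assms(1,2)] by simp
qed

lemma summable_odd_powr:
  fixes s :: real
  assumes "s > 1"
  shows "summable (\<lambda>n::nat. (2 * real n - 1) powr - s)"
proof (rule summable_comparison_test'[of "\<lambda>n. real n powr - s" 1])
  show "summable (\<lambda>n::nat. real n powr - s)"
    using assms by (simp add: summable_real_powr_iff)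
  show "norm ((2 * real n - 1) powr - s) \<le> real n powr - s" if "n \<ge> 1" for n
    using that assms by (auto intro!: powr_mono2')
qed

lemma multiple_zeta_eq_symmetric_sums:
  "mzeta k s = esym (\<lambda>n. real n powr - s) k"
  "mzeta_star k s = hsym (\<lambda>n. real n powr - s) k"
  "mt k s = esym (\<lambda>n. (2 * real n - 1) powr - s) k"
  "mt_star k s = hsym (\<lambda>n. (2 * real n - 1) powr - s) k"
  by (simp_all add: mzeta_def mzeta_star_def mt_def mt_star_def esym_def hsym_def)

theorem theorem1p4:
  fixes r :: nat and s :: real
  assumes "r \<ge> 1" and "s > 1"
  shows "mt r s = (\<Sum>j=0..r. (-1) ^ (r - j) / 2 powr (real (r - j) * s)
                      * mzeta j s * mzeta_star (r - j) s) \<and>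
         mt_star r s = (\<Sum>j=0..r. (-1) ^ (r - j) / 2 powr (real (r - j) * s)
                      * mzeta (r - j) s * mzeta_star j s)"
proof -
  define w where "w = (\<lambda>n::nat. real n powr - s)"
  define u where "u = (\<lambda>n::nat. (2 * real n - 1) powr - s)"
  define a where "a = (2::real) powr - s"
  have odd: "w (2*m - 1) = u m" if "m \<ge> 1" for m
    using that by (simp add: w_def u_def of_nat_diff)
  have even: "w (2*m) = a * w m" for m
    by (simp add: w_def a_def powr_mult)
  have w: "\<And>n. 0 \<le> w n" "summable w"
    unfolding w_def using assms(2) by (simp_all add: summable_real_powr_iff)
  have u: "\<And>n. 0 \<le> u n" "summable u"
    unfolding u_def using assms(2) by (simp_all add: summable_odd_powr)
  have "a ^ k = 2 powr - (real k * s)" for k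
    unfolding a_def by (subst powr_power) simp_all
  then have coeff: "(-1) ^ k / 2 powr (real k * s) = (-a) ^ k" for k
    by (simp add: power_minus[of a] powr_minus divide_inverse)
  show ?thesis
    unfolding coeff multiple_zeta_eq_symmetric_sums w_def[symmetric] u_def[symmetric]
    using esym_bisect[OF odd even w u] hsym_bisect[OF odd even w u] by blast
qed

end
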